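(* The quaternionic group $\mathcal{Q}$ is freely generated by the set of all elementary generators $\{\overline{g}[r]\}_{r\in\mathbb{Q}}$.
   Context: Let $\Phi=1+t^{-1}+t$, and for $f\in\mathbb{Q}[t,t^{-1}]$ let $\overline{f}(t)=f(t^{-1})$. $\mathrm{PGL}(2,\mathbb{Q}[t,t^{-1}])$ is the quotient of $\mathrm{GL}(2,\mathbb{Q}[t,t^{-1}])$ by scalar matrices with unit entries. The quaternionic group is $\mathcal{Q}=\{M\in\mathrm{PGL}(2,\mathbb{Q}[t,t^{-1}]) : M \text{ has a representative of the form }\begin{pmatrix}g_1&g_2\\-\Phi\overline{g_2}&\overline{g_1}\end{pmatrix}\text{ with }g_1,g_2\in\mathbb{Q}[t,t^{-1}]\}$. For $r\in\mathbb{Q}$ let $g[r]=\begin{pmatrix}t-r^2&r\\-r(1+t^{-1}+t)&t^{-1}-r^2\end{pmatrix}\in\mathrm{GL}(2,\mathbb{Q}[t,t^{-1}])$ (its determinant is $1+r^2+r^4$), and let the elementary generator $\overline{g}[r]$ be its image in $\mathrm{PGL}(2,\mathbb{Q}[t,t^{-1}])$. *)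

theory Defs
  imports "HOL-Computational_Algebra.Formal_Laurent_Series" "HOL-Algebra.Generated_Groups"
begin

definition laurent_polys :: "rat fls set" where
  "laurent_polys = {f. finite {n. fls_nth f n \<noteq> 0}}"

definition lp_units :: "rat fls set" where
  "lp_units = {u \<in> laurent_polys. \<exists>v \<in> laurent_polys. u * v = 1}"

definition lp_bar :: "rat fls \<Rightarrow> rat fls" where
  "lp_bar f = (\<Sum>n\<in>{n. fls_nth f n \<noteq> 0}. fls_const (fls_nth f n) * fls_X_intpow (- n))"

definition Phi :: "rat fls" where
  "Phi = 1 + fls_X_inv + fls_X"

datatype mat2 = M2 (e11: "rat fls") (e12: "rat fls") (e21: "rat fls") (e22: "rat fls")

definition mat2_mult :: "mat2 \<Rightarrow> mat2 \<Rightarrow> mat2" where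
  "mat2_mult A B = M2 (e11 A * e11 B + e12 A * e21 B) (e11 A * e12 B + e12 A * e22 B)
                      (e21 A * e11 B + e22 A * e21 B) (e21 A * e12 B + e22 A * e22 B)"

definition mat2_one :: mat2 where
  "mat2_one = M2 1 0 0 1"

definition mat2_det :: "mat2 \<Rightarrow> rat fls" where
  "mat2_det A = e11 A * e22 A - e12 A * e21 A"

definition mat2_smult :: "rat fls \<Rightarrow> mat2 \<Rightarrow> mat2" where
  "mat2_smult c A = M2 (c * e11 A) (c * e12 A) (c * e21 A) (c * e22 A)"

definition GL2 :: "mat2 set" where
  "GL2 = {A. e11 A \<in> laurent_polys \<and> e12 A \<in> laurent_polys \<and> e21 A \<in> laurent_polys
            \<and> e22 A \<in> laurent_polys \<and> mat2_det A \<in> lp_units}"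

definition pgl_class :: "mat2 \<Rightarrow> mat2 set" where
  "pgl_class A = {B \<in> GL2. \<exists>c \<in> lp_units. B = mat2_smult c A}"

definition PGL2 :: "mat2 set monoid" where
  "PGL2 = \<lparr> carrier = pgl_class ` GL2,
            mult = (\<lambda>X Y. pgl_class (mat2_mult (SOME A. A \<in> X) (SOME B. B \<in> Y))),
            one = pgl_class mat2_one \<rparr>"

definition quat_mat :: "rat fls \<Rightarrow> rat fls \<Rightarrow> mat2" where
  "quat_mat g1 g2 = M2 g1 g2 (- Phi * lp_bar g2) (lp_bar g1)"

definition quaternionic_group :: "mat2 set set" where
  "quaternionic_group = {X \<in> carrier PGL2.
      \<exists>g1 \<in> laurent_polys. \<exists>g2 \<in> laurent_polys. quat_mat g1 g2 \<in> X}"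

definition g_mat :: "rat \<Rightarrow> mat2" where
  "g_mat r = M2 (fls_X - fls_const (r^2)) (fls_const r)
               (- fls_const r * (1 + fls_X_inv + fls_X)) (fls_X_inv - fls_const (r^2))"

definition elem_gen :: "rat \<Rightarrow> mat2 set" where
  "elem_gen r = pgl_class (g_mat r)"

text \<open>Words in the generators: (i, True) stands for x_i, (i, False) for its inverse.\<close>
fun reduced_word :: "('i \<times> bool) list \<Rightarrow> bool" where
  "reduced_word ((i, b) # (j, c) # w) = (\<not> (i = j \<and> b \<noteq> c) \<and> reduced_word ((j, c) # w))"
| "reduced_word _ = True"

fun word_eval :: "('a, 'b) monoid_scheme \<Rightarrow> ('i \<Rightarrow> 'a) \<Rightarrow> ('i \<times> bool) list \<Rightarrow> 'a" where
  "word_eval G x [] = \<one>\<^bsub>G\<^esub>"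
| "word_eval G x ((i, b) # w) =
     (if b then x i else inv\<^bsub>G\<^esub> (x i)) \<otimes>\<^bsub>G\<^esub> word_eval G x w"

text \<open>The subset H of the group G is freely generated by the family x: H is the subgroup
  generated by the x_i, and no nonempty reduced word in the x_i evaluates to the identity
  (in particular the x_i are pairwise distinct, so {x_i} is a free basis).\<close>
definition freely_generated_by :: "('a, 'b) monoid_scheme \<Rightarrow> 'a set \<Rightarrow> ('i \<Rightarrow> 'a) \<Rightarrow> bool" where
  "freely_generated_by G H x \<longleftrightarrow>
     generate G (range x) = H \<and>
     (\<forall>w. w \<noteq> [] \<and> reduced_word w \<longrightarrow> word_eval G x w \<noteq> \<one>\<^bsub>G\<^esub>)"

end

theory Submission
  imports Defs
begin

text \<open>Freeness is a ping-pong argument for the action on column vectors \<open>(x, y)\<close> over \<open>Q((t))\<close>: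
  \<open>g[r]\<close> maps every nonzero vector outside the region \<open>y / x = r + O(t)\<close> into the region
  \<open>x / y = r t + O(t^2)\<close>, and \<open>g[r]^-1\<close> does the converse. All these regions are pairwise
  disjoint, so a nonempty reduced word moves a suitable test vector \<open>(1, s)\<close> into a region
  not containing it, and cannot act as a scalar.

  Generation is a descent on the width (degree minus subdegree) of the entry \<open>g1\<close> of a
  quaternionic matrix. Its determinant \<open>quat_norm g1 g2 = g1 bar(g1) + \<Phi> g2 bar(g2)\<close> is a unit fixed
  by conjugation, hence a nonzero constant. Comparing extreme coefficients, either \<open>g2 = 0\<close> and the
  matrix is a power of \<open>g[0] = diag(t, t^-1)\<close>, or the widths satisfy
  \<open>w(g1) = w(g2) + 1\<close> and, after centring by a power of \<open>g[0]\<close>, one factor \<open>g[r]^\<plusminus>1\<close> with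
  \<open>r\<close> a ratio of extreme coefficients lowers \<open>w(g1)\<close>.\<close>

unbundle fps_syntax


definition fls_support :: "'a::zero fls \<Rightarrow> int set" where
  "fls_support f = {n. f $$ n \<noteq> 0}"

lemma laurent_polys_iff_finite_support: "f \<in> laurent_polys \<longleftrightarrow> finite (fls_support f)"
  by (simp add: laurent_polys_def fls_support_def)

lemma fls_times_nth_finite_support:
  fixes f g :: "'a::comm_semiring_0 fls"
  assumes fin: "finite (fls_support f)"
  shows "(f * g) $$ n = (\<Sum>i\<in>fls_support f. f $$ i * g $$ (n - i))"
proof -
  let ?I = "{fls_subdegree f..n - fls_subdegree g}"
  let ?h = "\<lambda>i. f $$ i * g $$ (n - i)"
  have "(f * g) $$ n = sum ?h ?I" by (rule fls_times_nth(2))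
  also have "\<dots> = sum ?h (?I \<union> fls_support f)"
  proof (rule sum.mono_neutral_left)
    show "\<forall>i\<in>?I \<union> fls_support f - ?I. ?h i = 0"
    proof
      fix i assume i: "i \<in> ?I \<union> fls_support f - ?I"
      show "?h i = 0"
      proof (cases "f $$ i = 0")
        case False
        then have "fls_subdegree f \<le> i" by (rule fls_subdegree_leI)
        with i have "n - i < fls_subdegree g" by auto
        then show ?thesis by simp
      qed simp
    qed
  qed (auto simp: fin)
  also have "\<dots> = sum ?h (fls_support f)"
  proof (rule sum.mono_neutral_right)
    show "finite (?I \<union> fls_support f)" using fin by auto
    show "\<forall>i\<in>?I \<union> fls_support f - fls_support f. ?h i = 0" by (auto simp: fls_support_def)
  qed auto
  finally show ?thesis .
qed

lemma fls_support_times_subset: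
  fixes f g :: "'a::comm_semiring_0 fls"
  assumes "finite (fls_support f)"
  shows "fls_support (f * g) \<subseteq> (\<lambda>(i, j). i + j) ` (fls_support f \<times> fls_support g)"
proof
  fix n assume "n \<in> fls_support (f * g)"
  then have "(\<Sum>i\<in>fls_support f. f $$ i * g $$ (n - i)) \<noteq> 0"
    by (simp add: fls_support_def fls_times_nth_finite_support[OF assms])
  then obtain i where "i \<in> fls_support f" "f $$ i * g $$ (n - i) \<noteq> 0"
    by (meson sum.neutral)
  then have "(i, n - i) \<in> fls_support f \<times> fls_support g" by (auto simp: fls_support_def)
  then show "n \<in> (\<lambda>(i, j). i + j) ` (fls_support f \<times> fls_support g)" by force
qed

lemma finite_fls_support_times:
  fixes f g :: "'a::comm_semiring_0 fls"
  shows "finite (fls_support f) \<Longrightarrow> finite (fls_support g) \<Longrightarrow> finite (fls_support (f * g))"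
  using fls_support_times_subset[of f g] by (meson finite_SigmaI finite_imageI finite_subset)

lemma laurent_polys_times [intro]:
  "f \<in> laurent_polys \<Longrightarrow> g \<in> laurent_polys \<Longrightarrow> f * g \<in> laurent_polys"
  by (simp add: laurent_polys_iff_finite_support finite_fls_support_times)

lemma laurent_polys_add [intro]:
  "f \<in> laurent_polys \<Longrightarrow> g \<in> laurent_polys \<Longrightarrow> f + g \<in> laurent_polys"
  unfolding laurent_polys_iff_finite_support fls_support_def
  by (rule finite_subset[of _ "{n. f $$ n \<noteq> 0} \<union> {n. g $$ n \<noteq> 0}"]) auto

lemma laurent_polys_uminus [intro]: "f \<in> laurent_polys \<Longrightarrow> - f \<in> laurent_polys"
  by (simp add: laurent_polys_def)

lemma laurent_polys_diff [intro]:
  "f \<in> laurent_polys \<Longrightarrow> g \<in> laurent_polys \<Longrightarrow> f - g \<in> laurent_polys"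
  using laurent_polys_add[of f "- g"] by auto

lemma laurent_polys_const [simp, intro]: "fls_const c \<in> laurent_polys"
  unfolding laurent_polys_iff_finite_support fls_support_def
  by (rule finite_subset[of _ "{0}"]) auto

lemma laurent_polys_0 [simp, intro]: "0 \<in> laurent_polys"
  using laurent_polys_const[of 0] by simp

lemma laurent_polys_1 [simp, intro]: "1 \<in> laurent_polys"
  using laurent_polys_const[of 1] by simp

lemma laurent_polys_X_intpow [simp, intro]: "fls_X_intpow k \<in> laurent_polys"
  unfolding laurent_polys_iff_finite_support fls_support_def
  by (rule finite_subset[of _ "{k}"]) auto

lemma laurent_polys_X [simp, intro]: "fls_X \<in> laurent_polys"
  using laurent_polys_X_intpow[of 1] by (simp add: fls_X_conv_shift_1)

lemma laurent_polys_X_inv [simp, intro]: "fls_X_inv \<in> laurent_polys"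
  using laurent_polys_X_intpow[of "-1"] by (simp add: fls_X_inv_conv_shift_1)

lemma laurent_polys_Phi [simp, intro]: "Phi \<in> laurent_polys"
  unfolding Phi_def by auto

lemma lp_bar_nth:
  assumes "f \<in> laurent_polys"
  shows "lp_bar f $$ n = f $$ (- n)"
proof -
  have fin: "finite (fls_support f)"
    using assms by (simp add: laurent_polys_iff_finite_support)
  have "lp_bar f $$ n = (\<Sum>m\<in>fls_support f. (fls_const (f $$ m) * fls_X_intpow (- m)) $$ n)"
    by (simp add: lp_bar_def fls_nth_sum flip: fls_support_def)
  also have "\<dots> = (\<Sum>m\<in>fls_support f. if m = - n then f $$ m else 0)"
    by (rule sum.cong) (auto simp: fls_X_intpow_times_conv_shift(2))
  also have "\<dots> = f $$ (- n)"
    using fin by (auto simp: fls_support_def)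
  finally show ?thesis .
qed

lemma fls_support_lp_bar: "f \<in> laurent_polys \<Longrightarrow> fls_support (lp_bar f) = uminus ` fls_support f"
  by (auto simp: fls_support_def lp_bar_nth image_iff intro!: exI[of _ "- _"])

lemma laurent_polys_lp_bar [intro]: "f \<in> laurent_polys \<Longrightarrow> lp_bar f \<in> laurent_polys"
  by (simp add: laurent_polys_iff_finite_support fls_support_lp_bar)

lemmas laurent_polys_closed =
  laurent_polys_times laurent_polys_add laurent_polys_diff laurent_polys_uminus laurent_polys_lp_bar

lemma lp_bar_lp_bar [simp]: "f \<in> laurent_polys \<Longrightarrow> lp_bar (lp_bar f) = f"
  by (rule fls_eqI) (simp add: lp_bar_nth laurent_polys_lp_bar)

lemma lp_bar_add:
  "f \<in> laurent_polys \<Longrightarrow> g \<in> laurent_polys \<Longrightarrow> lp_bar (f + g) = lp_bar f + lp_bar g"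
  by (rule fls_eqI) (simp add: lp_bar_nth laurent_polys_add)

lemma lp_bar_uminus: "f \<in> laurent_polys \<Longrightarrow> lp_bar (- f) = - lp_bar f"
  by (rule fls_eqI) (simp add: lp_bar_nth laurent_polys_uminus)

lemma lp_bar_diff:
  "f \<in> laurent_polys \<Longrightarrow> g \<in> laurent_polys \<Longrightarrow> lp_bar (f - g) = lp_bar f - lp_bar g"
  by (rule fls_eqI) (simp add: lp_bar_nth laurent_polys_diff)

lemma lp_bar_const [simp]: "lp_bar (fls_const c) = fls_const c"
  by (rule fls_eqI) (simp add: lp_bar_nth)

lemma lp_bar_0 [simp]: "lp_bar 0 = 0"
  using lp_bar_const[of 0] by simp

lemma lp_bar_1 [simp]: "lp_bar 1 = 1"
  using lp_bar_const[of 1] by simp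

lemma lp_bar_X [simp]: "lp_bar fls_X = fls_X_inv"
  by (rule fls_eqI) (simp add: lp_bar_nth)

lemma lp_bar_X_inv [simp]: "lp_bar fls_X_inv = fls_X"
  by (rule fls_eqI) (simp add: lp_bar_nth)

lemma lp_bar_X_intpow [simp]: "lp_bar (fls_X_intpow k) = fls_X_intpow (- k)"
  by (rule fls_eqI) (simp add: lp_bar_nth)

lemma lp_bar_times:
  assumes f: "f \<in> laurent_polys" and g: "g \<in> laurent_polys"
  shows "lp_bar (f * g) = lp_bar f * lp_bar g"
proof (rule fls_eqI)
  fix n
  have fin: "finite (fls_support f)" "finite (fls_support (lp_bar f))"
    using f by (simp_all add: laurent_polys_iff_finite_support fls_support_lp_bar)
  have "lp_bar (f * g) $$ n = (\<Sum>i\<in>fls_support f. f $$ i * g $$ (- n - i))"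
    using f g by (simp add: lp_bar_nth laurent_polys_times fls_times_nth_finite_support fin)
  also have "\<dots> = (\<Sum>j\<in>uminus ` fls_support f. f $$ (- j) * g $$ (j - n))"
    by (subst sum.reindex) (auto simp: inj_on_def intro!: sum.cong arg_cong[where f = "fls_nth g"])
  also have "\<dots> = (lp_bar f * lp_bar g) $$ n"
    using f g by (simp add: fls_times_nth_finite_support fin fls_support_lp_bar lp_bar_nth)
  finally show "lp_bar (f * g) $$ n = (lp_bar f * lp_bar g) $$ n" .
qed

lemma lp_bar_Phi [simp]: "lp_bar Phi = Phi"
  by (simp add: Phi_def lp_bar_add laurent_polys_add algebra_simps)


lemma fls_X_times_nth [simp]: "(fls_X * f) $$ n = (f :: 'a::comm_ring_1 fls) $$ (n - 1)"
  by (simp add: fls_X_times_conv_shift)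

lemma fls_X_inv_times_nth [simp]: "(fls_X_inv * f) $$ n = (f :: 'a::comm_ring_1 fls) $$ (n + 1)"
  by (simp add: fls_X_inv_times_conv_shift)

lemma fls_X_times_X_inv: "fls_X * fls_X_inv = (1 :: 'a::comm_ring_1 fls)"
  by (simp add: fls_X_times_conv_shift)

lemma fls_shift_one_times_nth [simp]: "(fls_shift k 1 * f) $$ n = (f :: 'a::comm_ring_1 fls) $$ (n + k)"
  by (simp add: fls_shifted_times_simps)

definition vanishes_below :: "'a::zero fls \<Rightarrow> int \<Rightarrow> bool" where
  "vanishes_below f k \<longleftrightarrow> (\<forall>n<k. f $$ n = 0)"

definition vanishes_above :: "'a::zero fls \<Rightarrow> int \<Rightarrow> bool" where
  "vanishes_above f k \<longleftrightarrow> (\<forall>n>k. f $$ n = 0)"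

definition lp_degree :: "'a::zero fls \<Rightarrow> int" where
  "lp_degree f = Max (fls_support f)"

definition lp_width :: "'a::zero fls \<Rightarrow> int" where
  "lp_width f = lp_degree f - fls_subdegree f"

lemma vanishes_below_iff: "vanishes_below f k \<longleftrightarrow> f = 0 \<or> k \<le> fls_subdegree f"
proof
  assume vanish: "vanishes_below f k"
  show "f = 0 \<or> k \<le> fls_subdegree f"
  proof (rule ccontr)
    assume "\<not> (f = 0 \<or> k \<le> fls_subdegree f)"
    then have "f $$ fls_subdegree f \<noteq> 0" "fls_subdegree f < k" by auto
    with vanish show False by (simp add: vanishes_below_def)
  qed
qed (auto simp: vanishes_below_def)

lemma vanishes_below_nth: "vanishes_below f k \<Longrightarrow> n < k \<Longrightarrow> f $$ n = 0"
  by (simp add: vanishes_below_def)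

lemma vanishes_below_subdegree [simp]: "vanishes_below f (fls_subdegree f)"
  by (simp add: vanishes_below_iff)

lemma vanishes_below_mono: "vanishes_below f k \<Longrightarrow> j \<le> k \<Longrightarrow> vanishes_below f j"
  by (simp add: vanishes_below_def)

lemma vanishes_below_0 [simp]: "vanishes_below 0 k"
  by (simp add: vanishes_below_def)

lemma vanishes_below_add:
  "vanishes_below f k \<Longrightarrow> vanishes_below g k \<Longrightarrow> vanishes_below (f + g) k"
  by (simp add: vanishes_below_def)

lemma vanishes_below_diff:
  fixes f g :: "'a::group_add fls"
  shows "vanishes_below f k \<Longrightarrow> vanishes_below g k \<Longrightarrow> vanishes_below (f - g) k"
  by (simp add: vanishes_below_def)

lemma vanishes_below_uminus:
  fixes f :: "'a::group_add fls"
  shows "vanishes_below f k \<Longrightarrow> vanishes_below (- f) k"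
  by (simp add: vanishes_below_def)

lemma vanishes_below_times:
  fixes f g :: "'a::semiring_no_zero_divisors fls"
  shows "vanishes_below f a \<Longrightarrow> vanishes_below g b \<Longrightarrow> vanishes_below (f * g) (a + b)"
  by (cases "f = 0"; cases "g = 0") (auto simp: vanishes_below_iff)

lemma vanishes_below_times_left:
  fixes f g :: "'a::semiring_no_zero_divisors fls"
  shows "vanishes_below f 0 \<Longrightarrow> vanishes_below g k \<Longrightarrow> vanishes_below (f * g) k"
  using vanishes_below_times[of f 0 g k] by simp

lemma vanishes_below_X_times:
  fixes f :: "'a::comm_ring_1 fls"
  shows "vanishes_below f k \<Longrightarrow> vanishes_below (fls_X * f) (k + 1)"
  by (simp add: vanishes_below_def fls_X_times_conv_shift)

lemma vanishes_below_const [simp]: "vanishes_below (fls_const c) 0"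
  by (simp add: vanishes_below_def)

lemma vanishes_below_1 [simp]: "vanishes_below 1 0"
  by (simp add: vanishes_below_def)

lemma vanishes_below_X [simp]: "vanishes_below (fls_X :: 'a::comm_ring_1 fls) 0"
  by (simp add: vanishes_below_def)

lemma fls_subdegree_add_vanishing:
  assumes "f \<noteq> 0" "vanishes_below g (fls_subdegree f + 1)"
  shows "f + g \<noteq> 0" "fls_subdegree (f + g) = fls_subdegree f"
proof -
  have "g $$ fls_subdegree f = 0"
    using assms(2) by (simp add: vanishes_below_def)
  then have nz: "(f + g) $$ fls_subdegree f \<noteq> 0"
    using assms(1) by simp
  then show "f + g \<noteq> 0" by (rule fls_nonzeroI)
  show "fls_subdegree (f + g) = fls_subdegree f"
    using nz assms(2) by (intro fls_subdegree_eqI) (auto simp: vanishes_below_def)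
qed

lemma vanishes_above_times:
  fixes f g :: "'a::comm_semiring_0 fls"
  assumes "finite (fls_support f)" "vanishes_above f a" "vanishes_above g b"
  shows "vanishes_above (f * g) (a + b)"
  unfolding vanishes_above_def
proof (intro allI impI)
  fix n assume n: "n > a + b"
  have "f $$ i * g $$ (n - i) = 0" if "i \<in> fls_support f" for i
  proof -
    have "i \<le> a" using that assms(2) by (force simp: vanishes_above_def fls_support_def)
    then show ?thesis using assms(3) n by (simp add: vanishes_above_def)
  qed
  then show "(f * g) $$ n = 0"
    by (simp add: fls_times_nth_finite_support[OF assms(1)])
qed

lemma fls_times_nth_top:
  fixes f g :: "'a::comm_semiring_0 fls"
  assumes fin: "finite (fls_support f)" and "vanishes_above f a" "vanishes_above g b"
  shows "(f * g) $$ (a + b) = f $$ a * g $$ b"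
proof -
  have "(f * g) $$ (a + b) = (\<Sum>i\<in>fls_support f. if i = a then f $$ a * g $$ b else 0)"
    unfolding fls_times_nth_finite_support[OF fin]
  proof (rule sum.cong)
    fix i assume "i \<in> fls_support f"
    then have "i \<le> a" using assms(2) by (force simp: vanishes_above_def fls_support_def)
    then show "f $$ i * g $$ (a + b - i) = (if i = a then f $$ a * g $$ b else 0)"
      using assms(3) by (auto simp: vanishes_above_def)
  qed simp
  also have "\<dots> = f $$ a * g $$ b"
    using fin by (auto simp: fls_support_def)
  finally show ?thesis .
qed

lemma
  assumes "finite (fls_support f)" "f \<noteq> 0"
  shows vanishes_above_lp_degree: "vanishes_above f (lp_degree f)"
    and lp_degree_nth_nonzero: "f $$ lp_degree f \<noteq> 0"
proof -
  have ne: "fls_support f \<noteq> {}"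
    using assms(2) by (auto simp: fls_support_def fls_eq_iff)
  show "vanishes_above f (lp_degree f)"
    using Max_ge[OF assms(1)] by (force simp: vanishes_above_def lp_degree_def fls_support_def)
  show "f $$ lp_degree f \<noteq> 0"
    using Max_in[OF assms(1) ne] by (simp add: lp_degree_def fls_support_def)
qed

lemma lp_degree_eqI:
  assumes "finite (fls_support f)" "vanishes_above f k" "f $$ k \<noteq> 0"
  shows "lp_degree f = k"
  unfolding lp_degree_def
proof (rule Max_eqI[OF assms(1)])
  show "n \<le> k" if "n \<in> fls_support f" for n
    using that assms(2) by (force simp: vanishes_above_def fls_support_def)
qed (use assms(3) in \<open>simp add: fls_support_def\<close>)

lemma fls_subdegree_le_lp_degree:
  "finite (fls_support f) \<Longrightarrow> f \<noteq> 0 \<Longrightarrow> fls_subdegree f \<le> lp_degree f"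
  by (simp add: fls_subdegree_leI lp_degree_nth_nonzero)

lemma fls_eq_monomial:
  fixes f :: "'a::comm_ring_1 fls"
  assumes "finite (fls_support f)" "f \<noteq> 0" "lp_degree f = fls_subdegree f"
  shows "f = fls_const (f $$ fls_subdegree f) * fls_X_intpow (fls_subdegree f)"
proof (rule fls_eqI)
  fix n
  show "f $$ n = (fls_const (f $$ fls_subdegree f) * fls_X_intpow (fls_subdegree f)) $$ n"
    using vanishes_above_lp_degree[OF assms(1,2)] assms(3)
    by (cases n "fls_subdegree f" rule: linorder_cases) (simp_all add: vanishes_above_def)
qed

lemma lp_degree_times:
  fixes f g :: "'a::idom fls"
  assumes "finite (fls_support f)" "finite (fls_support g)" "f \<noteq> 0" "g \<noteq> 0"
  shows "lp_degree (f * g) = lp_degree f + lp_degree g"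
  using assms
  by (intro lp_degree_eqI) (simp_all add: finite_fls_support_times vanishes_above_times
      fls_times_nth_top vanishes_above_lp_degree lp_degree_nth_nonzero)

lemma lp_width_le:
  assumes "finite (fls_support f)" "f \<noteq> 0" "\<And>n. f $$ n \<noteq> 0 \<Longrightarrow> m \<le> n \<and> n \<le> M"
  shows "lp_width f \<le> M - m"
  using assms(3)[OF lp_degree_nth_nonzero[OF assms(1,2)]] assms(3)[of "fls_subdegree f"] assms(2)
  by (simp add: lp_width_def)


lemma lp_units_times:
  assumes "u \<in> lp_units" "v \<in> lp_units"
  shows "u * v \<in> lp_units"
proof -
  obtain a b where "a \<in> laurent_polys" "u * a = 1" "b \<in> laurent_polys" "v * b = 1"
    using assms by (auto simp: lp_units_def)
  moreover have "u * v * (a * b) = (u * a) * (v * b)"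
    by (simp add: ac_simps)
  ultimately show ?thesis
    using assms by (auto simp: lp_units_def intro!: bexI[of _ "a * b"])
qed

lemma lp_units_1 [simp]: "1 \<in> lp_units"
  by (auto simp: lp_units_def intro!: bexI[of _ 1])

lemma lp_units_const: "c \<noteq> 0 \<Longrightarrow> fls_const c \<in> lp_units"
  by (auto simp: lp_units_def intro!: bexI[of _ "fls_const (1 / c)"])

lemma lp_units_nonzero: "u \<in> lp_units \<Longrightarrow> u \<noteq> 0"
  by (auto simp: lp_units_def)

lemma lp_units_inverse:
  assumes "u \<in> lp_units"
  obtains v where "v \<in> lp_units" "v * u = 1"
  using assms by (auto simp: lp_units_def mult.commute)

lemma lp_units_monomial:
  assumes "u \<in> lp_units"
  shows "u = fls_const (u $$ fls_subdegree u) * fls_X_intpow (fls_subdegree u)"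
proof -
  obtain v where v: "v \<in> laurent_polys" "u * v = 1" and u: "u \<in> laurent_polys"
    using assms by (auto simp: lp_units_def)
  have nz: "u \<noteq> 0" "v \<noteq> 0" using v(2) by auto
  have fin: "finite (fls_support u)" "finite (fls_support v)"
    using u v by (simp_all add: laurent_polys_iff_finite_support)
  have "lp_degree (1 :: rat fls) = 0"
    by (rule lp_degree_eqI) (simp_all add: vanishes_above_def flip: laurent_polys_iff_finite_support)
  have "fls_subdegree u + fls_subdegree v = 0"
    using fls_subdegree_mult[OF nz] v(2) by simp
  moreover have "lp_degree u + lp_degree v = 0"
    using lp_degree_times[OF fin nz] v(2) \<open>lp_degree 1 = 0\<close> by simp
  moreover have "fls_subdegree u \<le> lp_degree u" "fls_subdegree v \<le> lp_degree v"
    using fin nz by (simp_all add: fls_subdegree_le_lp_degree)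
  ultimately have "lp_degree u = fls_subdegree u" by linarith
  then show ?thesis
    by (rule fls_eq_monomial[OF fin(1) nz(1)])
qed


definition mat2_adj :: "mat2 \<Rightarrow> mat2" where
  "mat2_adj A = M2 (e22 A) (- e12 A) (- e21 A) (e11 A)"

definition mat2_apply :: "mat2 \<Rightarrow> rat fls \<times> rat fls \<Rightarrow> rat fls \<times> rat fls" where
  "mat2_apply A v = (e11 A * fst v + e12 A * snd v, e21 A * fst v + e22 A * snd v)"

lemma mat2_mult_assoc: "mat2_mult (mat2_mult A B) C = mat2_mult A (mat2_mult B C)"
  by (simp add: mat2_mult_def algebra_simps)

lemma mat2_mult_one_left [simp]: "mat2_mult mat2_one A = A"
  by (cases A) (simp add: mat2_mult_def mat2_one_def)

lemma mat2_det_mult: "mat2_det (mat2_mult A B) = mat2_det A * mat2_det B"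
  by (simp add: mat2_mult_def mat2_det_def algebra_simps)

lemma mat2_smult_mult: "mat2_mult (mat2_smult c A) (mat2_smult d B) = mat2_smult (c * d) (mat2_mult A B)"
  by (simp add: mat2_mult_def mat2_smult_def algebra_simps)

lemma mat2_smult_smult: "mat2_smult d (mat2_smult c A) = mat2_smult (d * c) A"
  by (simp add: mat2_smult_def algebra_simps)

lemma mat2_smult_one [simp]: "mat2_smult 1 A = A"
  by (cases A) (simp add: mat2_smult_def)

lemma mat2_adj_mult: "mat2_mult (mat2_adj A) A = mat2_smult (mat2_det A) mat2_one"
  by (simp add: mat2_mult_def mat2_adj_def mat2_smult_def mat2_det_def mat2_one_def algebra_simps)

lemma mat2_det_adj: "mat2_det (mat2_adj A) = mat2_det A"
  by (simp add: mat2_adj_def mat2_det_def algebra_simps)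

lemma mat2_apply_mult: "mat2_apply (mat2_mult A B) v = mat2_apply A (mat2_apply B v)"
  by (simp add: mat2_apply_def mat2_mult_def algebra_simps)

lemma mat2_apply_one [simp]: "mat2_apply mat2_one v = v"
  by (simp add: mat2_apply_def mat2_one_def)

lemma mat2_apply_scalar: "mat2_apply (mat2_smult u mat2_one) v = (u * fst v, u * snd v)"
  by (simp add: mat2_apply_def mat2_smult_def mat2_one_def)

lemma GL2_mult: "A \<in> GL2 \<Longrightarrow> B \<in> GL2 \<Longrightarrow> mat2_mult A B \<in> GL2"
  by (auto simp: GL2_def mat2_det_mult lp_units_times) (auto simp: mat2_mult_def)

lemma GL2_one [simp]: "mat2_one \<in> GL2"
  by (simp add: GL2_def mat2_one_def mat2_det_def lp_units_def)

lemma GL2_adj: "A \<in> GL2 \<Longrightarrow> mat2_adj A \<in> GL2"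
  by (auto simp: GL2_def mat2_det_adj) (auto simp: mat2_adj_def)

lemma pgl_class_self: "A \<in> GL2 \<Longrightarrow> A \<in> pgl_class A"
  by (auto simp: pgl_class_def intro!: bexI[of _ 1])

lemma pgl_class_smult:
  assumes "A \<in> GL2" "c \<in> lp_units"
  shows "pgl_class (mat2_smult c A) = pgl_class A"
proof -
  obtain v where v: "v \<in> lp_units" "v * c = 1"
    using assms(2) by (rule lp_units_inverse)
  have "mat2_smult d A = mat2_smult (d * v) (mat2_smult c A)" for d
    using v by (simp add: mat2_smult_smult mult.assoc)
  then show ?thesis
    using assms v by (auto simp: pgl_class_def mat2_smult_smult intro: lp_units_times)
qed

lemma pgl_class_eq_of_mem: "B \<in> pgl_class A \<Longrightarrow> A \<in> GL2 \<Longrightarrow> pgl_class B = pgl_class A"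
  by (auto simp: pgl_class_def[of A] pgl_class_smult)

lemma carrier_PGL2: "carrier PGL2 = pgl_class ` GL2"
  by (simp add: PGL2_def)

lemma one_PGL2: "\<one>\<^bsub>PGL2\<^esub> = pgl_class mat2_one"
  by (simp add: PGL2_def)

lemma pgl_class_in_carrier [simp]: "A \<in> GL2 \<Longrightarrow> pgl_class A \<in> carrier PGL2"
  by (simp add: carrier_PGL2)

text \<open>The product of \<open>PGL2\<close> multiplies representatives picked by \<open>SOME\<close>; these differ from
  \<open>A\<close> and \<open>B\<close> only by unit scalars.\<close>
lemma mult_PGL2:
  assumes "A \<in> GL2" "B \<in> GL2"
  shows "pgl_class A \<otimes>\<^bsub>PGL2\<^esub> pgl_class B = pgl_class (mat2_mult A B)"
proof -
  let ?A = "SOME A'. A' \<in> pgl_class A" and ?B = "SOME B'. B' \<in> pgl_class B"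
  have "?A \<in> pgl_class A" "?B \<in> pgl_class B"
    using pgl_class_self[OF assms(1)] pgl_class_self[OF assms(2)] by (meson someI)+
  then obtain c d where "c \<in> lp_units" "?A = mat2_smult c A" "d \<in> lp_units" "?B = mat2_smult d B"
    by (auto simp: pgl_class_def)
  then show ?thesis
    by (simp add: PGL2_def mat2_smult_mult pgl_class_smult GL2_mult assms lp_units_times)
qed

lemma pgl_class_adj_mult:
  assumes "A \<in> GL2"
  shows "pgl_class (mat2_adj A) \<otimes>\<^bsub>PGL2\<^esub> pgl_class A = \<one>\<^bsub>PGL2\<^esub>"
proof -
  have "mat2_det A \<in> lp_units"
    using assms by (simp add: GL2_def)
  then show ?thesis
    using assms by (simp add: mult_PGL2 GL2_adj mat2_adj_mult pgl_class_smult one_PGL2)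
qed

lemma group_PGL2: "group PGL2"
proof (rule groupI)
  fix x y z
  assume "x \<in> carrier PGL2" "y \<in> carrier PGL2" "z \<in> carrier PGL2"
  then show "x \<otimes>\<^bsub>PGL2\<^esub> y \<otimes>\<^bsub>PGL2\<^esub> z = x \<otimes>\<^bsub>PGL2\<^esub> (y \<otimes>\<^bsub>PGL2\<^esub> z)"
    by (auto simp: carrier_PGL2 mult_PGL2 GL2_mult mat2_mult_assoc)
next
  fix x assume "x \<in> carrier PGL2"
  then obtain A where A: "A \<in> GL2" "x = pgl_class A"
    by (auto simp: carrier_PGL2)
  then have "pgl_class (mat2_adj A) \<otimes>\<^bsub>PGL2\<^esub> x = \<one>\<^bsub>PGL2\<^esub>"
    by (simp add: pgl_class_adj_mult)
  then show "\<exists>y\<in>carrier PGL2. y \<otimes>\<^bsub>PGL2\<^esub> x = \<one>\<^bsub>PGL2\<^esub>"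
    using A by (auto simp: GL2_adj)
qed (auto simp: carrier_PGL2 mult_PGL2 GL2_mult one_PGL2)

interpretation PGL2: group PGL2
  by (rule group_PGL2)

lemma inv_PGL2: "A \<in> GL2 \<Longrightarrow> inv\<^bsub>PGL2\<^esub> (pgl_class A) = pgl_class (mat2_adj A)"
  by (rule PGL2.inv_equality) (simp_all add: pgl_class_adj_mult GL2_adj)

lemma pgl_class_eq_one:
  assumes "A \<in> GL2" "pgl_class A = \<one>\<^bsub>PGL2\<^esub>"
  obtains c where "c \<in> lp_units" "A = mat2_smult c mat2_one"
  using pgl_class_self[OF assms(1)] assms(2) by (auto simp: one_PGL2 pgl_class_def)


section \<open>Quaternionic matrices\<close>

definition quat_norm :: "rat fls \<Rightarrow> rat fls \<Rightarrow> rat fls" where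
  "quat_norm g1 g2 = g1 * lp_bar g1 + Phi * g2 * lp_bar g2"

definition diag_mat :: "int \<Rightarrow> mat2" where
  "diag_mat k = quat_mat (fls_X_intpow k) 0"

lemma quat_mat_mult:
  assumes "a1 \<in> laurent_polys" "a2 \<in> laurent_polys" "b1 \<in> laurent_polys" "b2 \<in> laurent_polys"
  shows "mat2_mult (quat_mat a1 a2) (quat_mat b1 b2) =
    quat_mat (a1 * b1 - Phi * a2 * lp_bar b2) (a1 * b2 + a2 * lp_bar b1)"
  using assms
  by (simp add: mat2_mult_def quat_mat_def lp_bar_add lp_bar_diff lp_bar_times
      laurent_polys_closed algebra_simps)

lemma mat2_det_quat_mat: "mat2_det (quat_mat g1 g2) = quat_norm g1 g2"
  by (simp add: mat2_det_def quat_mat_def quat_norm_def algebra_simps)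

lemma mat2_adj_quat_mat:
  "g1 \<in> laurent_polys \<Longrightarrow> g2 \<in> laurent_polys \<Longrightarrow> mat2_adj (quat_mat g1 g2) = quat_mat (lp_bar g1) (- g2)"
  by (simp add: mat2_adj_def quat_mat_def lp_bar_uminus)

lemma quat_mat_in_GL2_iff:
  "g1 \<in> laurent_polys \<Longrightarrow> g2 \<in> laurent_polys \<Longrightarrow> quat_mat g1 g2 \<in> GL2 \<longleftrightarrow> quat_norm g1 g2 \<in> lp_units"
  by (simp add: GL2_def mat2_det_quat_mat) (simp add: quat_mat_def laurent_polys_closed)

lemma g_mat_eq_quat_mat: "g_mat r = quat_mat (fls_X - fls_const r * fls_const r) (fls_const r)"
  by (simp add: g_mat_def quat_mat_def Phi_def lp_bar_diff power2_eq_square algebra_simps)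

lemma mat2_adj_g_mat:
  "mat2_adj (g_mat r) = quat_mat (fls_X_inv - fls_const r * fls_const r) (- fls_const r)"
  by (simp add: g_mat_eq_quat_mat mat2_adj_quat_mat lp_bar_diff laurent_polys_closed)

lemma quat_norm_g_mat:
  "quat_norm (fls_X - fls_const r * fls_const r) (fls_const r) = fls_const (1 + r^2 + r^4)"
proof -
  define c where "c = (fls_const r :: rat fls)"
  have bar: "lp_bar c = c" "lp_bar (fls_X - c * c) = fls_X_inv - c * c"
    by (simp_all add: c_def lp_bar_diff laurent_polys_closed)
  have "fls_const (1 + r^2 + r^4) = 1 + c * c + c * c * c * c"
    by (simp add: c_def power2_eq_square power4_eq_xxxx flip: fls_plus_const)
  then show ?thesis
    unfolding quat_norm_def Phi_def c_def[symmetric] bar using fls_X_times_X_inv[where 'a = rat] by algebra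
qed

lemma GL2_g_mat: "g_mat r \<in> GL2"
proof -
  have "1 + r^2 + r^4 > 0"
    by (simp add: add_pos_nonneg)
  then have "quat_norm (fls_X - fls_const r * fls_const r) (fls_const r) \<in> lp_units"
    by (simp add: quat_norm_g_mat lp_units_const del: fls_const_mult_const)
  moreover have "fls_X - fls_const r * fls_const r \<in> laurent_polys"
    by (simp add: laurent_polys_closed)
  ultimately show ?thesis
    unfolding g_mat_eq_quat_mat using quat_mat_in_GL2_iff laurent_polys_const by blast
qed

lemma quaternionic_group_iff:
  "X \<in> quaternionic_group \<longleftrightarrow>
    (\<exists>g1\<in>laurent_polys. \<exists>g2\<in>laurent_polys. quat_mat g1 g2 \<in> GL2 \<and> X = pgl_class (quat_mat g1 g2))"
proof
  assume "X \<in> quaternionic_group"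
  then obtain A g1 g2 where A: "A \<in> GL2" "X = pgl_class A"
    and g: "g1 \<in> laurent_polys" "g2 \<in> laurent_polys" "quat_mat g1 g2 \<in> X"
    by (auto simp: quaternionic_group_def carrier_PGL2)
  moreover from g(3) A have "quat_mat g1 g2 \<in> GL2"
    by (simp add: pgl_class_def)
  ultimately show "\<exists>g1\<in>laurent_polys. \<exists>g2\<in>laurent_polys. quat_mat g1 g2 \<in> GL2 \<and> X = pgl_class (quat_mat g1 g2)"
    by (metis pgl_class_eq_of_mem)
qed (auto simp: quaternionic_group_def intro: pgl_class_self)

lemma subgroup_quaternionic_group: "subgroup quaternionic_group PGL2"
proof
  show "quaternionic_group \<subseteq> carrier PGL2"
    by (auto simp: quaternionic_group_def)
next
  fix x y assume "x \<in> quaternionic_group" "y \<in> quaternionic_group"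
  then obtain a1 a2 b1 b2 where
      a: "a1 \<in> laurent_polys" "a2 \<in> laurent_polys" "quat_mat a1 a2 \<in> GL2" "x = pgl_class (quat_mat a1 a2)"
    and b: "b1 \<in> laurent_polys" "b2 \<in> laurent_polys" "quat_mat b1 b2 \<in> GL2" "y = pgl_class (quat_mat b1 b2)"
    unfolding quaternionic_group_iff by blast
  then have "x \<otimes>\<^bsub>PGL2\<^esub> y = pgl_class (mat2_mult (quat_mat a1 a2) (quat_mat b1 b2))"
    and "mat2_mult (quat_mat a1 a2) (quat_mat b1 b2) \<in> GL2"
    by (simp_all add: mult_PGL2 GL2_mult)
  moreover have "a1 * b1 - Phi * a2 * lp_bar b2 \<in> laurent_polys" "a1 * b2 + a2 * lp_bar b1 \<in> laurent_polys"
    using a b by (simp_all add: laurent_polys_closed)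
  ultimately show "x \<otimes>\<^bsub>PGL2\<^esub> y \<in> quaternionic_group"
    unfolding quaternionic_group_iff using a b by (metis quat_mat_mult)
next
  have "mat2_one = quat_mat 1 0"
    by (simp add: mat2_one_def quat_mat_def)
  then show "\<one>\<^bsub>PGL2\<^esub> \<in> quaternionic_group"
    unfolding quaternionic_group_iff one_PGL2 by (metis GL2_one laurent_polys_0 laurent_polys_1)
next
  fix x assume "x \<in> quaternionic_group"
  then obtain a1 a2 where a: "a1 \<in> laurent_polys" "a2 \<in> laurent_polys" "quat_mat a1 a2 \<in> GL2"
      "x = pgl_class (quat_mat a1 a2)"
    unfolding quaternionic_group_iff by blast
  then have "inv\<^bsub>PGL2\<^esub> x = pgl_class (quat_mat (lp_bar a1) (- a2))"
    and "quat_mat (lp_bar a1) (- a2) \<in> GL2"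
    by (metis inv_PGL2 mat2_adj_quat_mat GL2_adj)+
  with a show "inv\<^bsub>PGL2\<^esub> x \<in> quaternionic_group"
    unfolding quaternionic_group_iff by (auto simp: laurent_polys_closed)
qed

lemma elem_gen_in_quaternionic_group: "elem_gen r \<in> quaternionic_group"
  unfolding quaternionic_group_iff elem_gen_def
  using GL2_g_mat[of r] by (auto simp: g_mat_eq_quat_mat laurent_polys_closed)

lemma generate_elem_gen_subset: "generate PGL2 (range elem_gen) \<subseteq> quaternionic_group"
  by (rule PGL2.generate_subgroup_incl[OF _ subgroup_quaternionic_group])
    (auto intro: elem_gen_in_quaternionic_group)

lemma subgroup_generate_elem_gen: "subgroup (generate PGL2 (range elem_gen)) PGL2"
  by (rule PGL2.generate_is_subgroup) (auto simp: elem_gen_def GL2_g_mat)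

lemma diag_mat_eq: "diag_mat k = M2 (fls_X_intpow k) 0 0 (fls_X_intpow (- k))"
  by (simp add: diag_mat_def quat_mat_def)

lemma GL2_diag_mat: "diag_mat k \<in> GL2"
proof -
  have "fls_X_intpow k * fls_X_intpow (- k) = (1 :: rat fls)"
    by (rule fls_eqI) simp
  then show ?thesis
    by (simp add: diag_mat_def quat_mat_in_GL2_iff quat_norm_def)
qed

lemma diag_mat_mult: "mat2_mult (diag_mat i) (diag_mat j) = diag_mat (i + j)"
  by (simp add: diag_mat_eq mat2_mult_def fls_shifted_times_simps add.commute)

lemma diag_mat_mult_quat_mat:
  "g1 \<in> laurent_polys \<Longrightarrow> g2 \<in> laurent_polys \<Longrightarrow>
    mat2_mult (diag_mat k) (quat_mat g1 g2) = quat_mat (fls_X_intpow k * g1) (fls_X_intpow k * g2)"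
  by (simp add: diag_mat_def quat_mat_mult)

text \<open>The diagonal matrices are the powers of \<open>g[0] = diag(t, t^-1)\<close>.\<close>
lemma diag_mat_in_generate: "pgl_class (diag_mat k) \<in> generate PGL2 (range elem_gen)"
proof -
  interpret gen: subgroup "generate PGL2 (range elem_gen)" PGL2
    by (rule subgroup_generate_elem_gen)
  have g0: "elem_gen 0 = pgl_class (diag_mat 1)"
    by (simp add: elem_gen_def g_mat_def diag_mat_eq fls_X_conv_shift_1 fls_X_inv_conv_shift_1)
  have step: "pgl_class (diag_mat (k + 1)) = elem_gen 0 \<otimes>\<^bsub>PGL2\<^esub> pgl_class (diag_mat k)" for k
    by (simp add: g0 mult_PGL2 GL2_diag_mat diag_mat_mult add.commute)
  have gen: "elem_gen 0 \<in> generate PGL2 (range elem_gen)"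
    by (simp add: generate.incl)
  show ?thesis
  proof (induction k rule: int_induct[where k = 0])
    case base
    have "diag_mat 0 = mat2_one" by (simp add: diag_mat_eq mat2_one_def)
    then show ?case using gen.one_closed by (simp add: one_PGL2)
  next
    case (step1 i)
    then show ?case by (simp add: step gen gen.m_closed)
  next
    case (step2 i)
    have "pgl_class (diag_mat (i - 1)) = inv\<^bsub>PGL2\<^esub> (elem_gen 0) \<otimes>\<^bsub>PGL2\<^esub> pgl_class (diag_mat i)"
      using step[of "i - 1"] GL2_diag_mat gen gen.subset
      by (simp add: PGL2.inv_solve_left PGL2.m_assoc)
    then show ?case by (simp add: step2 gen gen.m_closed gen.m_inv_closed)
  qed
qed


section \<open>Freeness by ping-pong\<close>

type_synonym letter = "rat \<times> bool"

definition letter_mat :: "letter \<Rightarrow> mat2" where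
  "letter_mat l = (if snd l then g_mat (fst l) else mat2_adj (g_mat (fst l)))"

definition letter_inv :: "letter \<Rightarrow> letter" where
  "letter_inv l = (fst l, \<not> snd l)"

fun word_mat :: "letter list \<Rightarrow> mat2" where
  "word_mat [] = mat2_one"
| "word_mat (l # w) = mat2_mult (letter_mat l) (word_mat w)"

text \<open>For a vector \<open>(x, y)\<close> over \<open>Q((t))\<close>, \<open>region_pos r\<close> says \<open>x / y = r t + O(t^2)\<close> and
  \<open>region_neg r\<close> says \<open>y / x = r + O(t)\<close>.\<close>
definition region_pos :: "rat \<Rightarrow> rat fls \<times> rat fls \<Rightarrow> bool" where
  "region_pos r v \<longleftrightarrow> snd v \<noteq> 0 \<and>
     vanishes_below (fst v - fls_const r * (fls_X * snd v)) (fls_subdegree (snd v) + 2)"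

definition region_neg :: "rat \<Rightarrow> rat fls \<times> rat fls \<Rightarrow> bool" where
  "region_neg r v \<longleftrightarrow> fst v \<noteq> 0 \<and>
     vanishes_below (snd v - fls_const r * fst v) (fls_subdegree (fst v) + 1)"

definition letter_region :: "letter \<Rightarrow> rat fls \<times> rat fls \<Rightarrow> bool" where
  "letter_region l v \<longleftrightarrow> (if snd l then region_pos (fst l) v else region_neg (fst l) v)"

lemma g_mat_eq:
  "g_mat r = M2 (fls_X - fls_const r * fls_const r) (fls_const r)
     (- fls_const r * (1 + fls_X_inv + fls_X)) (fls_X_inv - fls_const r * fls_const r)"
  by (simp add: g_mat_def power2_eq_square)

lemma not_region_neg:
  assumes "(x, y) \<noteq> (0, 0)" "\<not> region_neg r (x, y)"
  shows "y - fls_const r * x \<noteq> 0" "vanishes_below x (fls_subdegree (y - fls_const r * x))"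
proof -
  let ?e = "y - fls_const r * x"
  have "?e \<noteq> 0 \<and> vanishes_below x (fls_subdegree ?e)"
  proof (cases "x = 0")
    case True
    then show ?thesis using assms(1) by simp
  next
    case False
    then have "\<not> vanishes_below ?e (fls_subdegree x + 1)"
      using assms(2) by (simp add: region_neg_def)
    then have "?e \<noteq> 0" "fls_subdegree ?e \<le> fls_subdegree x"
      by (auto simp: vanishes_below_iff)
    then show ?thesis
      using vanishes_below_mono[OF vanishes_below_subdegree[of x]] by simp
  qed
  then show "?e \<noteq> 0" "vanishes_below x (fls_subdegree ?e)" by auto
qed

lemma not_region_pos:
  assumes "(x, y) \<noteq> (0, 0)" "\<not> region_pos r (x, y)"
  shows "x - fls_const r * (fls_X * y) \<noteq> 0"
    "vanishes_below y (fls_subdegree (x - fls_const r * (fls_X * y)) - 1)"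
proof -
  let ?d = "x - fls_const r * (fls_X * y)"
  have "?d \<noteq> 0 \<and> vanishes_below y (fls_subdegree ?d - 1)"
  proof (cases "y = 0")
    case True
    then show ?thesis using assms(1) by simp
  next
    case False
    then have "\<not> vanishes_below ?d (fls_subdegree y + 2)"
      using assms(2) by (simp add: region_pos_def)
    then have "?d \<noteq> 0" "fls_subdegree ?d - 1 \<le> fls_subdegree y"
      by (auto simp: vanishes_below_iff)
    then show ?thesis
      using vanishes_below_mono[OF vanishes_below_subdegree[of y]] by simp
  qed
  then show "?d \<noteq> 0" "vanishes_below y (fls_subdegree ?d - 1)" by auto
qed

lemma g_mat_region_pos:
  assumes nz: "v \<noteq> (0, 0)" and out: "\<not> region_neg r v"
  shows "region_pos r (mat2_apply (g_mat r) v)"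
proof -
  obtain x y where v: "v = (x, y)" by (cases v)
  define c where "c = (fls_const r :: rat fls)"
  define e where "e = y - c * x"
  have e: "e \<noteq> 0" and x: "vanishes_below x (fls_subdegree e)"
    using not_region_neg[of x y r] nz out by (simp_all add: v e_def c_def)
  define z where "z = fls_X * x"
  have z: "vanishes_below z (fls_subdegree e)"
    using vanishes_below_X_times[OF x] unfolding z_def by (rule vanishes_below_mono) simp
  define X where "X = (fls_X - c * c) * x + c * y"
  define Y where "Y = - c * (1 + fls_X_inv + fls_X) * x + (fls_X_inv - c * c) * y"
  have Xe: "fls_X_inv * e \<noteq> 0" "fls_subdegree (fls_X_inv * e) = fls_subdegree e - 1"
    using e by (simp_all add: fls_subdegree_mult_fls_X_inv)
  have "Y = fls_X_inv * e + (- (c * x) - c * z - c * (c * e) - c * (c * (c * x)))"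
    by (simp add: Y_def e_def z_def algebra_simps)
  moreover have "vanishes_below (- (c * x) - c * z - c * (c * e) - c * (c * (c * x))) (fls_subdegree e)"
    using x z unfolding c_def
    by (intro vanishes_below_diff vanishes_below_uminus vanishes_below_times_left) auto
  ultimately have Y: "Y \<noteq> 0" "fls_subdegree Y = fls_subdegree e - 1"
    using fls_subdegree_add_vanishing[OF Xe(1)] Xe(2) by simp_all
  have "X - c * (fls_X * Y) = fls_X * ((1 + c * c + c * c * c * c) * x + c * c * z + c * c * c * e)"
    unfolding X_def Y_def e_def z_def using fls_X_times_X_inv[where 'a = rat] by algebra
  moreover have "vanishes_below ((1 + c * c + c * c * c * c) * x + c * c * z + c * c * c * e) (fls_subdegree e)"
    using x z unfolding c_def by (intro vanishes_below_add vanishes_below_times_left) auto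
  ultimately have "vanishes_below (X - c * (fls_X * Y)) (fls_subdegree e + 1)"
    by (simp add: vanishes_below_X_times)
  moreover have "fls_subdegree Y + 2 = fls_subdegree e + 1"
    using Y(2) by simp
  ultimately have "vanishes_below (X - c * (fls_X * Y)) (fls_subdegree Y + 2)"
    by (simp only:)
  moreover have "mat2_apply (g_mat r) v = (X, Y)"
    by (simp add: mat2_apply_def g_mat_eq v X_def Y_def c_def)
  ultimately show ?thesis
    using Y(1) by (simp add: region_pos_def c_def)
qed

lemma g_mat_inv_region_neg:
  assumes nz: "v \<noteq> (0, 0)" and out: "\<not> region_pos r v"
  shows "region_neg r (mat2_apply (mat2_adj (g_mat r)) v)"
proof -
  obtain x y where v: "v = (x, y)" by (cases v)
  define c where "c = (fls_const r :: rat fls)"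
  define d where "d = x - c * (fls_X * y)"
  have d: "d \<noteq> 0" and y: "vanishes_below y (fls_subdegree d - 1)"
    using not_region_pos[of x y r] nz out by (simp_all add: v d_def c_def)
  define z where "z = fls_X * y"
  have z: "vanishes_below z (fls_subdegree d)"
    using vanishes_below_X_times[OF y] by (simp add: z_def)
  define X where "X = (fls_X_inv - c * c) * x + (- c) * y"
  define Y where "Y = (- (- c * (1 + fls_X_inv + fls_X))) * x + (fls_X - c * c) * y"
  have Xd: "fls_X_inv * d \<noteq> 0" "fls_subdegree (fls_X_inv * d) = fls_subdegree d - 1"
    using d by (simp_all add: fls_subdegree_mult_fls_X_inv)
  have "X = fls_X_inv * d + (- (c * c * d) - c * c * c * z)"
    unfolding X_def d_def z_def using fls_X_times_X_inv[where 'a = rat] by algebra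
  moreover have "vanishes_below (- (c * c * d) - c * c * c * z) (fls_subdegree d)"
    using z unfolding c_def by (intro vanishes_below_diff vanishes_below_uminus vanishes_below_times_left) auto
  ultimately have X: "X \<noteq> 0" "fls_subdegree X = fls_subdegree d - 1"
    using fls_subdegree_add_vanishing[OF Xd(1)] Xd(2) by simp_all
  have "Y - c * X = c * (1 + fls_X + c * c) * d + c * c * (1 + fls_X + c * c) * z + z"
    unfolding X_def Y_def d_def z_def by (simp add: algebra_simps)
  moreover have "vanishes_below (c * (1 + fls_X + c * c) * d + c * c * (1 + fls_X + c * c) * z + z) (fls_subdegree d)"
    using z unfolding c_def by (intro vanishes_below_add vanishes_below_times_left) auto
  ultimately have "vanishes_below (Y - c * X) (fls_subdegree X + 1)"
    using X(2) by simp
  moreover have "mat2_apply (mat2_adj (g_mat r)) v = (X, Y)"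
    by (simp add: mat2_apply_def g_mat_eq mat2_adj_def v X_def Y_def c_def)
  ultimately show ?thesis
    using X(1) by (simp add: region_neg_def c_def)
qed

lemma letter_region_nonzero: "letter_region l v \<Longrightarrow> v \<noteq> (0, 0)"
  by (auto simp: letter_region_def region_pos_def region_neg_def split: if_splits)

lemma letter_mat_region:
  "v \<noteq> (0, 0) \<Longrightarrow> \<not> letter_region (letter_inv l) v \<Longrightarrow> letter_region l (mat2_apply (letter_mat l) v)"
  by (auto simp: letter_region_def letter_mat_def letter_inv_def g_mat_region_pos g_mat_inv_region_neg)

lemma region_pos_neg_disjoint:
  assumes pos: "region_pos r v" and neg: "region_neg s v"
  shows False
proof -
  obtain x y where v: "v = (x, y)" by (cases v)
  have y: "y \<noteq> 0" and pos': "vanishes_below (x - fls_const r * (fls_X * y)) (fls_subdegree y + 1)"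
    using pos by (auto simp: region_pos_def v intro: vanishes_below_mono)
  have x: "x \<noteq> 0" and neg': "vanishes_below (y - fls_const s * x) (fls_subdegree x + 1)"
    using neg by (auto simp: region_neg_def v)
  have "vanishes_below (fls_const r * (fls_X * y)) (fls_subdegree y + 1)"
    by (intro vanishes_below_times_left vanishes_below_X_times) auto
  with pos' have "vanishes_below x (fls_subdegree y + 1)"
    using vanishes_below_add by fastforce
  then have le: "fls_subdegree y + 1 \<le> fls_subdegree x"
    using x by (simp add: vanishes_below_iff)
  have "vanishes_below (fls_const s * x) (fls_subdegree y + 1)"
    using \<open>vanishes_below x _\<close> by (intro vanishes_below_times_left) auto
  moreover have "vanishes_below (y - fls_const s * x) (fls_subdegree y + 1)"
    using neg' le by (auto intro: vanishes_below_mono)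
  ultimately have "vanishes_below y (fls_subdegree y + 1)"
    using vanishes_below_add by fastforce
  then show False
    using y by (simp add: vanishes_below_iff)
qed

lemma region_pos_unique:
  assumes "region_pos r v" "region_pos s v"
  shows "r = s"
proof (rule ccontr)
  assume "r \<noteq> s"
  obtain x y where v: "v = (x, y)" by (cases v)
  have "vanishes_below ((x - fls_const r * (fls_X * y)) - (x - fls_const s * (fls_X * y))) (fls_subdegree y + 2)"
    using assms by (intro vanishes_below_diff[of _ _ "x - _"]) (simp_all add: region_pos_def v)
  moreover have "(x - fls_const r * (fls_X * y)) - (x - fls_const s * (fls_X * y)) = fls_X * (fls_const (s - r) * y)"
    by (simp add: algebra_simps flip: fls_minus_const)
  ultimately have "vanishes_below (fls_X * (fls_const (s - r) * y)) (fls_subdegree y + 2)"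
    by simp
  then have "(fls_X * (fls_const (s - r) * y)) $$ (fls_subdegree y + 1) = 0"
    by (rule vanishes_below_nth) simp
  then show False
    using assms \<open>r \<noteq> s\<close> by (simp add: region_pos_def v)
qed

lemma region_neg_unique:
  assumes "region_neg r v" "region_neg s v"
  shows "r = s"
proof (rule ccontr)
  assume "r \<noteq> s"
  obtain x y where v: "v = (x, y)" by (cases v)
  have "vanishes_below ((y - fls_const r * x) - (y - fls_const s * x)) (fls_subdegree x + 1)"
    using assms by (intro vanishes_below_diff[of _ _ "y - _"]) (simp_all add: region_neg_def v)
  moreover have "(y - fls_const r * x) - (y - fls_const s * x) = fls_const (s - r) * x"
    by (simp add: algebra_simps flip: fls_minus_const)
  ultimately have "vanishes_below (fls_const (s - r) * x) (fls_subdegree x + 1)"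
    by simp
  then have "(fls_const (s - r) * x) $$ fls_subdegree x = 0"
    by (rule vanishes_below_nth) simp
  then show False
    using assms \<open>r \<noteq> s\<close> by (simp add: region_neg_def v)
qed

lemma letter_region_unique:
  assumes "letter_region l v" "letter_region l' v"
  shows "l = l'"
proof -
  obtain r b s c where l: "l = (r, b)" and l': "l' = (s, c)"
    by (cases l; cases l')
  have reg: "if b then region_pos r v else region_neg r v" "if c then region_pos s v else region_neg s v"
    using assms by (auto simp: l l' letter_region_def)
  show ?thesis
  proof (cases b; cases c)
    assume "b" "c"
    then show ?thesis using reg region_pos_unique l l' by simp
  next
    assume "\<not> b" "\<not> c"
    then show ?thesis using reg region_neg_unique l l' by simp
  next
    assume "b" "\<not> c"
    then show ?thesis using reg region_pos_neg_disjoint[of r v s] by simp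
  next
    assume "\<not> b" "c"
    then show ?thesis using reg region_pos_neg_disjoint[of s v r] by simp
  qed
qed

lemma letter_region_smult:
  assumes "a \<noteq> 0" "letter_region l (x, y)"
  shows "letter_region l (a * x, a * y)"
proof -
  obtain r b where l: "l = (r, b)" by (cases l)
  have a: "vanishes_below a (fls_subdegree a)" by simp
  show ?thesis
  proof (cases b)
    case True
    have "a * x - fls_const r * (fls_X * (a * y)) = a * (x - fls_const r * (fls_X * y))"
      by (simp add: algebra_simps)
    moreover have "vanishes_below (a * (x - fls_const r * (fls_X * y))) (fls_subdegree a + (fls_subdegree y + 2))"
      using assms(2) True by (intro vanishes_below_times[OF a]) (simp add: letter_region_def region_pos_def l)
    ultimately show ?thesis
      using assms True by (simp add: letter_region_def region_pos_def l add.assoc)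
  next
    case False
    have "a * y - fls_const r * (a * x) = a * (y - fls_const r * x)"
      by (simp add: algebra_simps)
    moreover have "vanishes_below (a * (y - fls_const r * x)) (fls_subdegree a + (fls_subdegree x + 1))"
      using assms(2) False by (intro vanishes_below_times[OF a]) (simp add: letter_region_def region_neg_def l)
    ultimately show ?thesis
      using assms False by (simp add: letter_region_def region_neg_def l add.assoc)
  qed
qed

lemma letter_region_test_vector: "letter_region l (1, fls_const s) \<Longrightarrow> l = (s, False)"
proof (cases l)
  case (Pair r b)
  assume reg: "letter_region l (1, fls_const s)"
  show ?thesis
  proof (cases b)
    case True
    then have "vanishes_below (1 - fls_const r * (fls_X * fls_const s)) 2"
      using reg by (simp add: letter_region_def region_pos_def Pair)
    then have "(1 - fls_const r * (fls_X * fls_const s)) $$ 0 = 0"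
      by (rule vanishes_below_nth) simp
    then show ?thesis by simp
  next
    case False
    then have "vanishes_below (fls_const s - fls_const r * 1) 1"
      using reg by (simp add: letter_region_def region_neg_def Pair)
    then have "(fls_const s - fls_const r * 1) $$ 0 = 0"
      by (rule vanishes_below_nth) simp
    then show ?thesis
      using Pair False by simp
  qed
qed

lemma GL2_letter_mat: "letter_mat l \<in> GL2"
  by (simp add: letter_mat_def GL2_g_mat GL2_adj)

lemma GL2_word_mat: "word_mat w \<in> GL2"
  by (induction w) (auto intro: GL2_mult GL2_letter_mat)

lemma word_eval_elem_gen: "word_eval PGL2 elem_gen w = pgl_class (word_mat w)"
proof (induction w)
  case Nil
  then show ?case by (simp add: one_PGL2)
next
  case (Cons l w)
  obtain r b where l: "l = (r, b)" by (cases l)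
  have "(if b then elem_gen r else inv\<^bsub>PGL2\<^esub> (elem_gen r)) = pgl_class (letter_mat l)"
    by (simp add: l elem_gen_def letter_mat_def inv_PGL2 GL2_g_mat)
  then show ?case
    using Cons by (simp add: l mult_PGL2 GL2_letter_mat GL2_word_mat)
qed

lemma word_mat_region:
  "reduced_word w \<Longrightarrow> w \<noteq> [] \<Longrightarrow> v \<noteq> (0, 0) \<Longrightarrow> \<not> letter_region (letter_inv (last w)) v
    \<Longrightarrow> letter_region (hd w) (mat2_apply (word_mat w) v)"
proof (induction w rule: reduced_word.induct)
  case (1 i b j c w)
  then have IH: "letter_region (j, c) (mat2_apply (word_mat ((j, c) # w)) v)"
    by simp
  moreover have "(j, c) \<noteq> letter_inv (i, b)"
    using "1.prems"(1) by (auto simp: letter_inv_def)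
  ultimately have "\<not> letter_region (letter_inv (i, b)) (mat2_apply (word_mat ((j, c) # w)) v)"
    using letter_region_unique by blast
  then show ?case
    using IH letter_region_nonzero letter_mat_region by (simp add: mat2_apply_mult)
next
  case ("2_2" l)
  then show ?case by (simp add: letter_mat_region mat2_apply_mult)
qed simp

text \<open>With \<open>s\<close> different from the first and last letters, \<open>(1, s)\<close> lies in neither of the
  regions that matter, yet a scalar matrix would keep it in its region.\<close>
lemma word_eval_elem_gen_ne_one:
  assumes "w \<noteq> []" "reduced_word w"
  shows "word_eval PGL2 elem_gen w \<noteq> \<one>\<^bsub>PGL2\<^esub>"
proof
  assume "word_eval PGL2 elem_gen w = \<one>\<^bsub>PGL2\<^esub>"
  then have "pgl_class (word_mat w) = \<one>\<^bsub>PGL2\<^esub>"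
    by (simp add: word_eval_elem_gen)
  then obtain u where u: "u \<in> lp_units" "word_mat w = mat2_smult u mat2_one"
    using pgl_class_eq_one[OF GL2_word_mat] by blast
  obtain u' where u': "u' * u = 1"
    using lp_units_inverse[OF u(1)] by blast
  define s where "s = \<bar>fst (hd w)\<bar> + \<bar>fst (last w)\<bar> + 1"
  have s: "s \<noteq> fst (hd w)" "s \<noteq> fst (last w)"
    unfolding s_def by linarith+
  then have "\<not> letter_region (letter_inv (last w)) (1, fls_const s)"
    by (auto simp: letter_inv_def dest: letter_region_test_vector)
  then have "letter_region (hd w) (mat2_apply (word_mat w) (1, fls_const s))"
    using assms by (intro word_mat_region) auto
  then have "letter_region (hd w) (u * 1, u * fls_const s)"
    by (simp add: u mat2_apply_scalar)
  then have "letter_region (hd w) (u' * (u * 1), u' * (u * fls_const s))"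
    by (rule letter_region_smult[rotated]) (use u' in auto)
  moreover have "u' * (u * 1) = 1" "u' * (u * fls_const s) = fls_const s"
    using u' by (simp_all add: mult.assoc[symmetric])
  ultimately have "hd w = (s, False)"
    by (intro letter_region_test_vector) simp
  with s show False
    by simp
qed


section \<open>Generation by descent on the width\<close>

lemma lp_bar_vanishes_above: "f \<in> laurent_polys \<Longrightarrow> vanishes_above (lp_bar f) (- fls_subdegree f)"
  by (simp add: vanishes_above_def lp_bar_nth)

lemma
  assumes "f \<in> laurent_polys" "f \<noteq> 0"
  shows vanishes_above_times_lp_bar: "vanishes_above (f * lp_bar f) (lp_width f)"
    and times_lp_bar_nth_width: "(f * lp_bar f) $$ lp_width f = f $$ lp_degree f * f $$ fls_subdegree f"
proof -
  have fin: "finite (fls_support f)"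
    using assms(1) by (simp add: laurent_polys_iff_finite_support)
  note top = vanishes_above_lp_degree[OF fin assms(2)] lp_bar_vanishes_above[OF assms(1)]
  show "vanishes_above (f * lp_bar f) (lp_width f)"
    using vanishes_above_times[OF fin top] by (simp add: lp_width_def)
  show "(f * lp_bar f) $$ lp_width f = f $$ lp_degree f * f $$ fls_subdegree f"
    using fls_times_nth_top[OF fin top] assms(1) by (simp add: lp_width_def lp_bar_nth)
qed

lemma
  assumes "f \<in> laurent_polys" "f \<noteq> 0"
  shows vanishes_above_Phi_times_lp_bar: "vanishes_above (Phi * f * lp_bar f) (lp_width f + 1)"
    and Phi_times_lp_bar_nth_width:
      "(Phi * f * lp_bar f) $$ (lp_width f + 1) = f $$ lp_degree f * f $$ fls_subdegree f"
proof -
  have Phi: "finite (fls_support Phi)" "vanishes_above Phi 1"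
    using laurent_polys_Phi by (simp_all add: laurent_polys_iff_finite_support vanishes_above_def Phi_def)
  have "Phi $$ 1 = 1"
    by (simp add: Phi_def)
  then show "vanishes_above (Phi * f * lp_bar f) (lp_width f + 1)"
    and "(Phi * f * lp_bar f) $$ (lp_width f + 1) = f $$ lp_degree f * f $$ fls_subdegree f"
    using vanishes_above_times[OF Phi vanishes_above_times_lp_bar[OF assms]]
      fls_times_nth_top[OF Phi vanishes_above_times_lp_bar[OF assms]] times_lp_bar_nth_width[OF assms]
    by (simp_all add: mult.assoc add.commute)
qed

lemma quat_norm_constant:
  assumes "g1 \<in> laurent_polys" "g2 \<in> laurent_polys" "quat_mat g1 g2 \<in> GL2"
  obtains c where "c \<noteq> 0" "quat_norm g1 g2 = fls_const c"
proof -
  define N where "N = quat_norm g1 g2"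
  define k where "k = fls_subdegree N"
  have "N \<in> lp_units"
    using assms quat_mat_in_GL2_iff by (simp add: N_def)
  then have N: "N = fls_const (N $$ k) * fls_X_intpow k" "N $$ k \<noteq> 0"
    using lp_units_monomial lp_units_nonzero by (auto simp: k_def)
  have nth: "N $$ n = (if n = k then N $$ k else 0)" for n
  proof -
    have "N $$ n = (fls_const (N $$ k) * fls_X_intpow k) $$ n"
      using N(1) by (rule arg_cong)
    then show ?thesis by simp
  qed
  have "lp_bar N = N"
    using assms by (simp add: N_def quat_norm_def lp_bar_add lp_bar_times laurent_polys_closed algebra_simps)
  then have "N $$ (- k) = N $$ k"
    using lp_bar_nth[of N "- k"] assms by (simp add: N_def quat_norm_def laurent_polys_closed)
  then have "k = 0"
    using N(2) nth[of "- k"] by (auto split: if_splits)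
  then show ?thesis
    using N that by (simp add: N_def)
qed

lemma quat_first_nonzero:
  assumes g: "g1 \<in> laurent_polys" "g2 \<in> laurent_polys" "quat_mat g1 g2 \<in> GL2"
  shows "g1 \<noteq> 0"
proof
  assume "g1 = 0"
  obtain c where c: "c \<noteq> 0" "quat_norm g1 g2 = fls_const c"
    using quat_norm_constant[OF g] .
  then have "g2 \<noteq> 0"
    using \<open>g1 = 0\<close> by (auto simp: quat_norm_def)
  have "0 \<le> lp_width g2"
    using g(2) \<open>g2 \<noteq> 0\<close> by (simp add: lp_width_def fls_subdegree_le_lp_degree
        flip: laurent_polys_iff_finite_support)
  then have "(Phi * g2 * lp_bar g2) $$ (lp_width g2 + 1) = 0"
    using c \<open>g1 = 0\<close> by (simp add: quat_norm_def)
  then show False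
    using Phi_times_lp_bar_nth_width[OF g(2) \<open>g2 \<noteq> 0\<close>] g(2) \<open>g2 \<noteq> 0\<close>
    by (simp add: lp_degree_nth_nonzero flip: laurent_polys_iff_finite_support)
qed

lemma quat_second_zero_width:
  assumes g: "g1 \<in> laurent_polys" "g2 \<in> laurent_polys" "quat_mat g1 g2 \<in> GL2" and "g2 = 0"
  shows "lp_width g1 = 0"
proof (rule ccontr)
  assume width: "lp_width g1 \<noteq> 0"
  obtain c where c: "quat_norm g1 g2 = fls_const c"
    using quat_norm_constant[OF g] by blast
  have "g1 \<noteq> 0"
    using quat_first_nonzero[OF g] .
  then have "(g1 * lp_bar g1) $$ lp_width g1 \<noteq> 0"
    using times_lp_bar_nth_width[OF g(1)] g(1)
    by (simp add: lp_degree_nth_nonzero flip: laurent_polys_iff_finite_support)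
  then show False
    using c width \<open>g2 = 0\<close> by (simp add: quat_norm_def)
qed

lemma fls_top_coeffs_cancel:
  fixes A B :: "'a::ab_group_add fls"
  assumes sum: "A + B = fls_const c"
    and A: "vanishes_above A a" "A $$ a \<noteq> 0" and B: "vanishes_above B b" "B $$ b \<noteq> 0"
    and "0 < b"
  shows "a = b" and "A $$ a + B $$ b = 0"
proof -
  have zero: "(A + B) $$ n = 0" if "n \<noteq> 0" for n
    using that by (simp add: sum)
  show "a = b"
  proof (rule ccontr)
    assume "a \<noteq> b"
    then consider "b < a" | "a < b" by linarith
    then show False
    proof cases
      case 1
      then show False using zero[of a] A(2) B(1) \<open>0 < b\<close> by (simp add: vanishes_above_def)
    next
      case 2
      then show False using zero[of b] B(2) A(1) \<open>0 < b\<close> by (simp add: vanishes_above_def)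
    qed
  qed
  then show "A $$ a + B $$ b = 0"
    using zero[of b] \<open>0 < b\<close> by simp
qed

lemma quat_second_nonzero_width:
  assumes g: "g1 \<in> laurent_polys" "g2 \<in> laurent_polys" "quat_mat g1 g2 \<in> GL2" and "g2 \<noteq> 0"
  shows "lp_width g1 = lp_width g2 + 1"
    and "g1 $$ lp_degree g1 * g1 $$ fls_subdegree g1 + g2 $$ lp_degree g2 * g2 $$ fls_subdegree g2 = 0"
proof -
  obtain c where c: "g1 * lp_bar g1 + Phi * g2 * lp_bar g2 = fls_const c"
    using quat_norm_constant[OF g] unfolding quat_norm_def by blast
  have "g1 \<noteq> 0"
    using quat_first_nonzero[OF g] .
  have fin: "finite (fls_support g1)" "finite (fls_support g2)"
    using g by (simp_all add: laurent_polys_iff_finite_support)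
  have "g1 $$ lp_degree g1 * g1 $$ fls_subdegree g1 \<noteq> 0"
    "g2 $$ lp_degree g2 * g2 $$ fls_subdegree g2 \<noteq> 0"
    using fin \<open>g1 \<noteq> 0\<close> \<open>g2 \<noteq> 0\<close> by (simp_all add: lp_degree_nth_nonzero)
  moreover have "0 < lp_width g2 + 1"
    using fin \<open>g2 \<noteq> 0\<close> by (simp add: lp_width_def fls_subdegree_le_lp_degree)
  ultimately show "lp_width g1 = lp_width g2 + 1"
    and "g1 $$ lp_degree g1 * g1 $$ fls_subdegree g1 + g2 $$ lp_degree g2 * g2 $$ fls_subdegree g2 = 0"
    using fls_top_coeffs_cancel[OF c
        vanishes_above_times_lp_bar[OF g(1) \<open>g1 \<noteq> 0\<close>] _
        vanishes_above_Phi_times_lp_bar[OF g(2) \<open>g2 \<noteq> 0\<close>]]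
      times_lp_bar_nth_width[OF g(1) \<open>g1 \<noteq> 0\<close>] Phi_times_lp_bar_nth_width[OF g(2) \<open>g2 \<noteq> 0\<close>]
    by simp_all
qed

lemma reduced_coeff_window_even:
  fixes a b h :: "int \<Rightarrow> rat"
  assumes za: "\<And>i. i < ma \<Longrightarrow> a i = 0" "\<And>i. i > Ma \<Longrightarrow> a i = 0"
    and zb: "\<And>i. i < mb \<Longrightarrow> b i = 0" "\<And>i. i > Mb \<Longrightarrow> b i = 0"
    and P: "Ma - ma = Mb - mb + 1" and K: "2 * k = - (ma + Mb)"
    and rel: "a Ma * a ma + b Mb * b mb = 0" and aM: "a Ma \<noteq> 0" and r: "r = b mb / a Ma"
    and h: "\<And>n. h n = a (n + 1 - k) - r * r * a (n - k) + r * (b (- n - 1 - k) + b (- n - k) + b (- n + 1 - k))"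
    and nz: "h n \<noteq> 0"
  shows "ma + k \<le> n \<and> n \<le> Ma + k - 1"
proof (rule ccontr)
  assume "\<not> (ma + k \<le> n \<and> n \<le> Ma + k - 1)"
  then consider "n < ma + k - 1" | "n = ma + k - 1" | "n = Ma + k" | "n > Ma + k"
    by linarith
  then show False
  proof cases
    case 1
    have "a (n + 1 - k) = 0" "a (n - k) = 0" by (rule za(1), use 1 in linarith)+
    moreover have "b (- n - 1 - k) = 0" "b (- n - k) = 0" "b (- n + 1 - k) = 0"
      by (rule zb(2), use 1 K in linarith)+
    ultimately show False using nz h by simp
  next
    case 2
    have "a (n - k) = 0" by (rule za(1)) (use 2 in linarith)
    moreover have "b (- n - k) = 0" "b (- n + 1 - k) = 0" by (rule zb(2), use 2 K in linarith)+
    moreover have "n + 1 - k = ma" "- n - 1 - k = Mb" using 2 K by linarith+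
    ultimately have "h n = a ma + r * b Mb" using h by simp
    also have "\<dots> = (a Ma * a ma + b Mb * b mb) / a Ma" using aM r by (simp add: field_simps)
    also have "\<dots> = 0" using rel by simp
    finally show False using nz by simp
  next
    case 3
    have "a (n + 1 - k) = 0" by (rule za(2)) (use 3 in linarith)
    moreover have "b (- n - 1 - k) = 0" "b (- n - k) = 0" by (rule zb(1), use 3 K P in linarith)+
    moreover have "n - k = Ma" "- n + 1 - k = mb" using 3 K P by linarith+
    ultimately have "h n = - r * r * a Ma + r * b mb" using h by simp
    also have "\<dots> = 0" using aM r by (simp add: field_simps)
    finally show False using nz by simp
  next
    case 4
    have "a (n + 1 - k) = 0" "a (n - k) = 0" by (rule za(2), use 4 in linarith)+
    moreover have "b (- n - 1 - k) = 0" "b (- n - k) = 0" "b (- n + 1 - k) = 0"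
      by (rule zb(1), use 4 K P in linarith)+
    ultimately show False using nz h by simp
  qed
qed

lemma reduced_coeff_window_odd:
  fixes a b h :: "int \<Rightarrow> rat"
  assumes za: "\<And>i. i < ma \<Longrightarrow> a i = 0" "\<And>i. i > Ma \<Longrightarrow> a i = 0"
    and zb: "\<And>i. i < mb \<Longrightarrow> b i = 0" "\<And>i. i > Mb \<Longrightarrow> b i = 0"
    and P: "Ma - ma = Mb - mb + 1" and K: "2 * k = - (ma + Mb + 1)"
    and rel: "a Ma * a ma + b Mb * b mb = 0" and bm: "b mb \<noteq> 0" and r: "r = a Ma / b mb"
    and h: "\<And>n. h n = a (n - 1 - k) - r * r * a (n - k) - r * (b (- n - 1 - k) + b (- n - k) + b (- n + 1 - k))"
    and nz: "h n \<noteq> 0"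
  shows "ma + k + 1 \<le> n \<and> n \<le> Ma + k"
proof (rule ccontr)
  assume "\<not> (ma + k + 1 \<le> n \<and> n \<le> Ma + k)"
  then consider "n < ma + k" | "n = ma + k" | "n = Ma + k + 1" | "n > Ma + k + 1"
    by linarith
  then show False
  proof cases
    case 1
    have "a (n - 1 - k) = 0" "a (n - k) = 0" by (rule za(1), use 1 in linarith)+
    moreover have "b (- n - 1 - k) = 0" "b (- n - k) = 0" "b (- n + 1 - k) = 0"
      by (rule zb(2), use 1 K in linarith)+
    ultimately show False using nz h by simp
  next
    case 2
    have "a (n - 1 - k) = 0" by (rule za(1)) (use 2 in linarith)
    moreover have "b (- n - k) = 0" "b (- n + 1 - k) = 0" by (rule zb(2), use 2 K in linarith)+
    moreover have "n - k = ma" "- n - 1 - k = Mb" using 2 K by linarith+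
    ultimately have "h n = - r * r * a ma - r * b Mb" using h by simp
    also have "\<dots> = - r * (r * a ma + b Mb)" by (simp add: algebra_simps)
    also have "r * a ma + b Mb = (a Ma * a ma + b Mb * b mb) / b mb" using bm r by (simp add: field_simps)
    also have "\<dots> = 0" using rel by simp
    finally show False using nz by simp
  next
    case 3
    have "a (n - k) = 0" by (rule za(2)) (use 3 in linarith)
    moreover have "b (- n - 1 - k) = 0" "b (- n - k) = 0" by (rule zb(1), use 3 K P in linarith)+
    moreover have "n - 1 - k = Ma" "- n + 1 - k = mb" using 3 K P by linarith+
    ultimately have "h n = a Ma - r * b mb" using h by simp
    also have "\<dots> = 0" using bm r by (simp add: field_simps)
    finally show False using nz by simp
  next
    case 4
    have "a (n - 1 - k) = 0" "a (n - k) = 0" by (rule za(2), use 4 in linarith)+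
    moreover have "b (- n - 1 - k) = 0" "b (- n - k) = 0" "b (- n + 1 - k) = 0"
      by (rule zb(1), use 4 K P in linarith)+
    ultimately show False using nz h by simp
  qed
qed

lemma quat_extreme_coeffs:
  assumes g: "g1 \<in> laurent_polys" "g2 \<in> laurent_polys" "quat_mat g1 g2 \<in> GL2" and "g2 \<noteq> 0"
  shows "\<And>i. i < fls_subdegree g1 \<Longrightarrow> g1 $$ i = 0" "\<And>i. i > lp_degree g1 \<Longrightarrow> g1 $$ i = 0"
    and "\<And>i. i < fls_subdegree g2 \<Longrightarrow> g2 $$ i = 0" "\<And>i. i > lp_degree g2 \<Longrightarrow> g2 $$ i = 0"
    and "g1 $$ lp_degree g1 \<noteq> 0" "g2 $$ fls_subdegree g2 \<noteq> 0"
proof -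
  have fin: "finite (fls_support g1)" "finite (fls_support g2)"
    using g by (simp_all add: laurent_polys_iff_finite_support)
  have "g1 \<noteq> 0"
    using quat_first_nonzero[OF g(1-3)] .
  show "\<And>i. i < fls_subdegree g1 \<Longrightarrow> g1 $$ i = 0" "\<And>i. i < fls_subdegree g2 \<Longrightarrow> g2 $$ i = 0"
    by simp_all
  show "\<And>i. i > lp_degree g1 \<Longrightarrow> g1 $$ i = 0" "\<And>i. i > lp_degree g2 \<Longrightarrow> g2 $$ i = 0"
    using vanishes_above_lp_degree[OF fin(1) \<open>g1 \<noteq> 0\<close>] vanishes_above_lp_degree[OF fin(2) \<open>g2 \<noteq> 0\<close>]
    by (simp_all add: vanishes_above_def)
  show "g1 $$ lp_degree g1 \<noteq> 0" "g2 $$ fls_subdegree g2 \<noteq> 0"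
    using lp_degree_nth_nonzero fin \<open>g1 \<noteq> 0\<close> \<open>g2 \<noteq> 0\<close> by simp_all
qed

text \<open>After centring the support by a power of \<open>g[0]\<close>, one factor \<open>g[r]^-1\<close> (\<open>g[r]\<close> in the
  odd case) kills both extreme coefficients of the first entry.\<close>
lemma quat_reduce_even:
  assumes g: "g1 \<in> laurent_polys" "g2 \<in> laurent_polys" "quat_mat g1 g2 \<in> GL2" "g2 \<noteq> 0"
    and even: "even (fls_subdegree g1 + lp_degree g2)"
  obtains l k m h1 h2 where
    "mat2_mult (letter_mat l) (mat2_mult (diag_mat k) (quat_mat g1 g2)) = quat_mat h1 h2"
    "h1 \<in> laurent_polys" "h2 \<in> laurent_polys"
    "\<And>n. h1 $$ n \<noteq> 0 \<Longrightarrow> m \<le> n \<and> n \<le> m + lp_width g1 - 1"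
proof -
  define k where "k = - ((fls_subdegree g1 + lp_degree g2) div 2)"
  have K: "2 * k = - (fls_subdegree g1 + lp_degree g2)"
    using even unfolding k_def by auto
  define r where "r = g2 $$ fls_subdegree g2 / g1 $$ lp_degree g1"
  define c where "c = (fls_const r :: rat fls)"
  define h1 where "h1 = (fls_X_inv - c * c) * (fls_X_intpow k * g1) - Phi * (- c) * lp_bar (fls_X_intpow k * g2)"
  define h2 where "h2 = (fls_X_inv - c * c) * (fls_X_intpow k * g2) + (- c) * lp_bar (fls_X_intpow k * g1)"
  have prod: "mat2_mult (letter_mat (r, False)) (mat2_mult (diag_mat k) (quat_mat g1 g2)) = quat_mat h1 h2"
    using g by (simp add: letter_mat_def mat2_adj_g_mat diag_mat_mult_quat_mat quat_mat_mult
        laurent_polys_closed h1_def h2_def c_def)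
  have h: "h1 \<in> laurent_polys" "h2 \<in> laurent_polys"
    using g by (simp_all add: h1_def h2_def c_def laurent_polys_closed)
  have coeff: "h1 $$ n = g1 $$ (n + 1 - k) - r * r * g1 $$ (n - k)
       + r * (g2 $$ (- n - 1 - k) + g2 $$ (- n - k) + g2 $$ (- n + 1 - k))" for n
  proof -
    have "h1 = fls_X_inv * (fls_X_intpow k * g1) - c * c * (fls_X_intpow k * g1)
       + c * (fls_X_inv * (fls_X_intpow (- k) * lp_bar g2)) + c * (fls_X_intpow (- k) * lp_bar g2)
       + c * (fls_X * (fls_X_intpow (- k) * lp_bar g2))"
      using g unfolding h1_def by (simp add: lp_bar_times Phi_def algebra_simps)
    then show ?thesis
      unfolding c_def using g(2) by (simp add: lp_bar_nth; simp add: algebra_simps)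
  qed
  show ?thesis
  proof (rule that[OF prod h])
    fix n assume nz: "h1 $$ n \<noteq> 0"
    from reduced_coeff_window_even[OF quat_extreme_coeffs(1-4)[OF g]
        quat_second_nonzero_width(1)[OF g, unfolded lp_width_def] K
        quat_second_nonzero_width(2)[OF g] quat_extreme_coeffs(5)[OF g] r_def coeff nz]
    show "fls_subdegree g1 + k \<le> n \<and> n \<le> fls_subdegree g1 + k + lp_width g1 - 1"
      by (simp add: lp_width_def)
  qed
qed

lemma quat_reduce_odd:
  assumes g: "g1 \<in> laurent_polys" "g2 \<in> laurent_polys" "quat_mat g1 g2 \<in> GL2" "g2 \<noteq> 0"
    and odd: "odd (fls_subdegree g1 + lp_degree g2)"
  obtains l k m h1 h2 where
    "mat2_mult (letter_mat l) (mat2_mult (diag_mat k) (quat_mat g1 g2)) = quat_mat h1 h2"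
    "h1 \<in> laurent_polys" "h2 \<in> laurent_polys"
    "\<And>n. h1 $$ n \<noteq> 0 \<Longrightarrow> m \<le> n \<and> n \<le> m + lp_width g1 - 1"
proof -
  define k where "k = - ((fls_subdegree g1 + lp_degree g2 + 1) div 2)"
  have "even (fls_subdegree g1 + lp_degree g2 + 1)"
    using odd by simp
  then have K: "2 * k = - (fls_subdegree g1 + lp_degree g2 + 1)"
    using even_two_times_div_two unfolding k_def by fastforce
  define r where "r = g1 $$ lp_degree g1 / g2 $$ fls_subdegree g2"
  define c where "c = (fls_const r :: rat fls)"
  define h1 where "h1 = (fls_X - c * c) * (fls_X_intpow k * g1) - Phi * c * lp_bar (fls_X_intpow k * g2)"
  define h2 where "h2 = (fls_X - c * c) * (fls_X_intpow k * g2) + c * lp_bar (fls_X_intpow k * g1)"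
  have prod: "mat2_mult (letter_mat (r, True)) (mat2_mult (diag_mat k) (quat_mat g1 g2)) = quat_mat h1 h2"
    using g by (simp add: letter_mat_def g_mat_eq_quat_mat diag_mat_mult_quat_mat quat_mat_mult
        laurent_polys_closed h1_def h2_def c_def)
  have h: "h1 \<in> laurent_polys" "h2 \<in> laurent_polys"
    using g by (simp_all add: h1_def h2_def c_def laurent_polys_closed)
  have coeff: "h1 $$ n = g1 $$ (n - 1 - k) - r * r * g1 $$ (n - k)
       - r * (g2 $$ (- n - 1 - k) + g2 $$ (- n - k) + g2 $$ (- n + 1 - k))" for n
  proof -
    have "h1 = fls_X * (fls_X_intpow k * g1) - c * c * (fls_X_intpow k * g1)
       - c * (fls_X_inv * (fls_X_intpow (- k) * lp_bar g2)) - c * (fls_X_intpow (- k) * lp_bar g2)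
       - c * (fls_X * (fls_X_intpow (- k) * lp_bar g2))"
      using g unfolding h1_def by (simp add: lp_bar_times Phi_def algebra_simps)
    then show ?thesis
      unfolding c_def using g(2) by (simp add: lp_bar_nth; simp add: algebra_simps)
  qed
  show ?thesis
  proof (rule that[OF prod h])
    fix n assume nz: "h1 $$ n \<noteq> 0"
    from reduced_coeff_window_odd[OF quat_extreme_coeffs(1-4)[OF g]
        quat_second_nonzero_width(1)[OF g, unfolded lp_width_def] K
        quat_second_nonzero_width(2)[OF g] quat_extreme_coeffs(6)[OF g] r_def coeff nz]
    show "fls_subdegree g1 + k + 1 \<le> n \<and> n \<le> fls_subdegree g1 + k + 1 + lp_width g1 - 1"
      by (simp add: lp_width_def)
  qed
qed

lemma quat_width_reduction:
  assumes g: "g1 \<in> laurent_polys" "g2 \<in> laurent_polys" "quat_mat g1 g2 \<in> GL2" "g2 \<noteq> 0"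
  obtains l k h1 h2 where
    "mat2_mult (letter_mat l) (mat2_mult (diag_mat k) (quat_mat g1 g2)) = quat_mat h1 h2"
    "h1 \<in> laurent_polys" "h2 \<in> laurent_polys" "quat_mat h1 h2 \<in> GL2" "lp_width h1 < lp_width g1"
proof -
  obtain l k m h1 h2 where
    red: "mat2_mult (letter_mat l) (mat2_mult (diag_mat k) (quat_mat g1 g2)) = quat_mat h1 h2"
    and h: "h1 \<in> laurent_polys" "h2 \<in> laurent_polys"
    and window: "\<And>n. h1 $$ n \<noteq> 0 \<Longrightarrow> m \<le> n \<and> n \<le> m + lp_width g1 - 1"
  proof (cases "even (fls_subdegree g1 + lp_degree g2)")
    case True
    show ?thesis by (rule quat_reduce_even[OF g True]) (rule that)
  next
    case False
    show ?thesis by (rule quat_reduce_odd[OF g False]) (rule that)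
  qed
  have GL: "quat_mat h1 h2 \<in> GL2"
    unfolding red[symmetric] by (intro GL2_mult GL2_letter_mat GL2_diag_mat g(3))
  have "lp_width h1 \<le> m + lp_width g1 - 1 - m"
    using h(1) quat_first_nonzero[OF h GL] window
    by (intro lp_width_le) (simp_all add: laurent_polys_iff_finite_support)
  then show ?thesis
    using that red h GL by simp
qed

lemma quat_class_monomial_in_generate:
  assumes g: "g1 \<in> laurent_polys" "quat_mat g1 0 \<in> GL2"
  shows "pgl_class (quat_mat g1 0) \<in> generate PGL2 (range elem_gen)"
proof -
  define m where "m = fls_subdegree g1"
  have "g1 \<noteq> 0"
    using quat_first_nonzero[OF g(1) laurent_polys_0 g(2)] .
  moreover have "lp_degree g1 = m"
    using quat_second_zero_width[OF g(1) laurent_polys_0 g(2)] by (simp add: lp_width_def m_def)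
  moreover define a where "a = g1 $$ m"
  ultimately have g1: "g1 = fls_const a * fls_X_intpow m" "a \<noteq> 0"
    using g(1) fls_eq_monomial unfolding a_def by (auto simp: m_def laurent_polys_iff_finite_support)
  have "quat_mat g1 0 = mat2_smult (fls_const a) (diag_mat m)"
    unfolding g1(1) by (simp add: quat_mat_def diag_mat_eq mat2_smult_def lp_bar_times)
  then have "pgl_class (quat_mat g1 0) = pgl_class (diag_mat m)"
    using g1(2) by (simp add: pgl_class_smult GL2_diag_mat lp_units_const)
  then show ?thesis
    using diag_mat_in_generate by simp
qed

lemma quat_class_in_generate:
  assumes "g1 \<in> laurent_polys" "g2 \<in> laurent_polys" "quat_mat g1 g2 \<in> GL2"
  shows "pgl_class (quat_mat g1 g2) \<in> generate PGL2 (range elem_gen)"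
  using assms
proof (induction "nat (lp_width g1)" arbitrary: g1 g2 rule: less_induct)
  case less
  interpret gen: subgroup "generate PGL2 (range elem_gen)" PGL2
    by (rule subgroup_generate_elem_gen)
  show ?case
  proof (cases "g2 = 0")
    case True
    then show ?thesis
      using quat_class_monomial_in_generate less.prems by simp
  next
    case False
    obtain l k h1 h2 where
      red: "mat2_mult (letter_mat l) (mat2_mult (diag_mat k) (quat_mat g1 g2)) = quat_mat h1 h2"
      and h: "h1 \<in> laurent_polys" "h2 \<in> laurent_polys" "quat_mat h1 h2 \<in> GL2"
      and smaller: "lp_width h1 < lp_width g1"
      using quat_width_reduction[OF less.prems False] by blast
    have "0 \<le> lp_width h1"
      using h quat_first_nonzero[OF h]
      by (simp add: lp_width_def fls_subdegree_le_lp_degree laurent_polys_iff_finite_support)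
    then have H: "pgl_class (quat_mat h1 h2) \<in> generate PGL2 (range elem_gen)"
      using less.hyps[OF _ h] smaller by simp
    let ?L = "pgl_class (letter_mat l)" and ?D = "pgl_class (diag_mat k)"
    have LD: "?L \<in> generate PGL2 (range elem_gen)" "?D \<in> generate PGL2 (range elem_gen)"
      using gen.m_inv_closed[of "elem_gen (fst l)"] diag_mat_in_generate
      by (auto simp: letter_mat_def elem_gen_def inv_PGL2 GL2_g_mat intro: generate.incl)
    have "pgl_class (quat_mat h1 h2) = (?L \<otimes>\<^bsub>PGL2\<^esub> ?D) \<otimes>\<^bsub>PGL2\<^esub> pgl_class (quat_mat g1 g2)"
      using less.prems(3) unfolding red[symmetric]
      by (simp add: mult_PGL2 GL2_letter_mat GL2_diag_mat GL2_mult mat2_mult_assoc)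
    then have "pgl_class (quat_mat g1 g2) = inv\<^bsub>PGL2\<^esub> (?L \<otimes>\<^bsub>PGL2\<^esub> ?D) \<otimes>\<^bsub>PGL2\<^esub> pgl_class (quat_mat h1 h2)"
      using less.prems(3) LD gen.subset
      by (simp add: PGL2.inv_solve_left PGL2.m_closed subsetD)
    then show ?thesis
      using LD H by (simp add: gen.m_closed gen.m_inv_closed)
  qed
qed

theorem theorem4p9:
  shows "freely_generated_by PGL2 quaternionic_group elem_gen"
  unfolding freely_generated_by_def
proof
  show "generate PGL2 (range elem_gen) = quaternionic_group"
  proof
    show "quaternionic_group \<subseteq> generate PGL2 (range elem_gen)"
      using quat_class_in_generate by (auto simp: quaternionic_group_iff)
  qed (rule generate_elem_gen_subset)
  show "\<forall>w. w \<noteq> [] \<and> reduced_word w \<longrightarrow> word_eval PGL2 elem_gen w \<noteq> \<one>\<^bsub>PGL2\<^esub>"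
    using word_eval_elem_gen_ne_one by blast
qed

end
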